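(* Let $\mathbf{X}=(X_1,\ldots,X_d)$ have mutually independent components, $Y=\eta(\mathbf{X})\in\mathcal{Y}$ with $\eta$ measurable, and $k_{\mathcal{Y}}$ a positive definite kernel on $\mathcal{Y}$ such that for every $A\subseteq\{1,\ldots,d\}$ and every $\mathbf{x}_A$, $\mathbb{E}_{\xi\sim\mathrm{P}_{Y\mid\mathbf{X}_A=\mathbf{x}_A}}k_{\mathcal{Y}}(\xi,\xi)<\infty$, and assume $\mathrm{MMD}^2_{\mathrm{tot}}>0$. For $A\subseteq\{1,\ldots,d\}$ define the total MMD-based index $S_A^{T,\mathrm{MMD}}=\sum_{B\subseteq\{1,\ldots,d\},\,B\cap A\neq\emptyset}\mathrm{MMD}^2_B/\mathrm{MMD}^2_{\mathrm{tot}}$. Then $$S_A^{T,\mathrm{MMD}}=\frac{\mathbb{E}_{\mathbf{X}_{-A}}\Big[\mathbb{E}_{\xi\sim\mathrm{P}_{Y\mid\mathbf{X}_{-A}}}k_{\mathcal{Y}}(\xi,\xi)-\mathbb{E}_{\xi,\xi'\sim\mathrm{P}_{Y\mid\mathbf{X}_{-A}}}k_{\mathcal{Y}}(\xi,\xi')\Big]}{\mathrm{MMD}^2_{\mathrm{tot}}}.$$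
   Context: $\mathbf{X}_A$ is the subvector with indices in $A$ and $\mathbf{X}_{-A}$ the subvector with indices in $\{1,\ldots,d\}\setminus A$; $\mathrm{P}_{Y\mid\mathbf{X}_B}$ is the conditional law of $Y$ given $\mathbf{X}_B$ ($=\mathrm{P}_Y$ if $B=\emptyset$), and $\xi,\xi'$ denote independent draws from it. $\mathrm{MMD}^2(\mathrm{P},\mathrm{Q})=\mathbb{E}k_{\mathcal{Y}}(\xi,\xi')-2\mathbb{E}k_{\mathcal{Y}}(\xi,\zeta)+\mathbb{E}k_{\mathcal{Y}}(\zeta,\zeta')$ with $\xi,\xi'\sim\mathrm{P}$, $\zeta,\zeta'\sim\mathrm{Q}$ independent. $\mathrm{MMD}^2_{\mathrm{tot}}=\mathbb{E}k_{\mathcal{Y}}(Y,Y)-\mathbb{E}k_{\mathcal{Y}}(Y,Y')$ with $Y'$ an independent copy of $Y$, and $\mathrm{MMD}^2_B=\sum_{C\subseteq B}(-1)^{|B|-|C|}\mathbb{E}_{\mathbf{X}_C}(\mathrm{MMD}^2(\mathrm{P}_Y,\mathrm{P}_{Y\mid\mathbf{X}_C}))$. *)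

theory Defs
  imports "HOL-Probability.Probability"
begin

text \<open>Index set of the input components (0-based: {0..<d} stands for {1,...,d}).\<close>
abbreviation idx :: "nat \<Rightarrow> nat set" where "idx d \<equiv> {0..<d}"

definition pos_def_kernel :: "'y measure \<Rightarrow> ('y \<Rightarrow> 'y \<Rightarrow> real) \<Rightarrow> bool" where
  "pos_def_kernel K k \<longleftrightarrow>
     (\<forall>x\<in>space K. \<forall>y\<in>space K. k x y = k y x) \<and>
     (\<forall>n::nat. \<forall>xs c. (\<forall>i<n. xs i \<in> space K) \<longrightarrow>
        (\<Sum>i<n. \<Sum>j<n. c i * c j * k (xs i) (xs j)) \<ge> (0::real))"

definition kcross :: "('y \<Rightarrow> 'y \<Rightarrow> real) \<Rightarrow> 'y measure \<Rightarrow> 'y measure \<Rightarrow> real" where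
  "kcross k P Q = (\<integral>\<xi>. (\<integral>\<zeta>. k \<xi> \<zeta> \<partial>Q) \<partial>P)"

definition kdiag :: "('y \<Rightarrow> 'y \<Rightarrow> real) \<Rightarrow> 'y measure \<Rightarrow> real" where
  "kdiag k P = (\<integral>\<xi>. k \<xi> \<xi> \<partial>P)"

definition mmd2 :: "('y \<Rightarrow> 'y \<Rightarrow> real) \<Rightarrow> 'y measure \<Rightarrow> 'y measure \<Rightarrow> real" where
  "mmd2 k P Q = kcross k P P - 2 * kcross k P Q + kcross k Q Q"

definition lawY :: "'a measure \<Rightarrow> (nat \<Rightarrow> 'a \<Rightarrow> 'b) \<Rightarrow> nat \<Rightarrow> ((nat \<Rightarrow> 'b) \<Rightarrow> 'y)
                    \<Rightarrow> 'y measure \<Rightarrow> 'y measure" where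
  "lawY M X d \<eta> K = distr M K (\<lambda>\<omega>. \<eta> (\<lambda>i\<in>idx d. X i \<omega>))"

definition lawX :: "'a measure \<Rightarrow> (nat \<Rightarrow> 'b measure) \<Rightarrow> (nat \<Rightarrow> 'a \<Rightarrow> 'b) \<Rightarrow> nat set
                    \<Rightarrow> (nat \<Rightarrow> 'b) measure" where
  "lawX M N X C = distr M (PiM C N) (\<lambda>\<omega>. \<lambda>i\<in>C. X i \<omega>)"

text \<open>Conditional law of Y given X_C = x (the canonical version under independence of
  the components: fix the coordinates in C to x and integrate the others against the
  product of their marginal laws).\<close>
definition condLaw :: "'a measure \<Rightarrow> (nat \<Rightarrow> 'b measure) \<Rightarrow> (nat \<Rightarrow> 'a \<Rightarrow> 'b) \<Rightarrow> nat
                       \<Rightarrow> ((nat \<Rightarrow> 'b) \<Rightarrow> 'y) \<Rightarrow> 'y measure \<Rightarrow> nat set \<Rightarrow> (nat \<Rightarrow> 'b) \<Rightarrow> 'y measure" where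
  "condLaw M N X d \<eta> K C x =
     distr (PiM (idx d - C) (\<lambda>i. distr M (N i) (X i))) K
           (\<lambda>z. \<eta> (merge C (idx d - C) (x, z)))"

definition MMD2_tot :: "'a measure \<Rightarrow> (nat \<Rightarrow> 'a \<Rightarrow> 'b) \<Rightarrow> nat \<Rightarrow> ((nat \<Rightarrow> 'b) \<Rightarrow> 'y)
                        \<Rightarrow> 'y measure \<Rightarrow> ('y \<Rightarrow> 'y \<Rightarrow> real) \<Rightarrow> real" where
  "MMD2_tot M X d \<eta> K k = kdiag k (lawY M X d \<eta> K) - kcross k (lawY M X d \<eta> K) (lawY M X d \<eta> K)"

definition MMD2_B :: "'a measure \<Rightarrow> (nat \<Rightarrow> 'b measure) \<Rightarrow> (nat \<Rightarrow> 'a \<Rightarrow> 'b) \<Rightarrow> nat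
                      \<Rightarrow> ((nat \<Rightarrow> 'b) \<Rightarrow> 'y) \<Rightarrow> 'y measure \<Rightarrow> ('y \<Rightarrow> 'y \<Rightarrow> real) \<Rightarrow> nat set \<Rightarrow> real" where
  "MMD2_B M N X d \<eta> K k B =
     (\<Sum>C\<in>Pow B. (-1) ^ (card B - card C) *
        (\<integral>x. mmd2 k (lawY M X d \<eta> K) (condLaw M N X d \<eta> K C x) \<partial>(lawX M N X C)))"

definition total_MMD_index :: "'a measure \<Rightarrow> (nat \<Rightarrow> 'b measure) \<Rightarrow> (nat \<Rightarrow> 'a \<Rightarrow> 'b) \<Rightarrow> nat
                      \<Rightarrow> ((nat \<Rightarrow> 'b) \<Rightarrow> 'y) \<Rightarrow> 'y measure \<Rightarrow> ('y \<Rightarrow> 'y \<Rightarrow> real) \<Rightarrow> nat set \<Rightarrow> real" where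
  "total_MMD_index M N X d \<eta> K k A =
     (\<Sum>B\<in>{B. B \<subseteq> idx d \<and> B \<inter> A \<noteq> {}}. MMD2_B M N X d \<eta> K k B) / MMD2_tot M X d \<eta> K k"

end

theory Submission
  imports Defs
begin

text \<open>Write \<open>f C\<close> for the \<open>X\<^sub>C\<close>-average of \<open>MMD\<^sup>2(P\<^sub>Y, P(Y | X\<^sub>C))\<close>. The indices \<open>MMD\<^sup>2\<^sub>B\<close>
  are the Moebius transform of \<open>f\<close>, so their sum over all \<open>B\<close> meeting \<open>A\<close> telescopes to
  \<open>f I - f (I - A)\<close>. By independence, \<open>P(Y | X\<^sub>C = x)\<close> is the image under \<open>\<eta>\<close> of the product of
  the remaining marginals with \<open>x\<close> fixed, so averaging it over \<open>x\<close> returns \<open>P\<^sub>Y\<close> (tower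
  property). Hence the cross term \<open>E k(\<xi>, Y)\<close> averages to \<open>E k(Y, Y')\<close>, and
  \<open>f C = E\<^sub>x E k(\<xi>, \<xi>') - E k(Y, Y')\<close> for independent draws \<open>\<xi>, \<xi>'\<close> from \<open>P(Y | X\<^sub>C = x)\<close>.
  For \<open>C = I\<close> the conditional law is the Dirac mass at \<open>\<eta> x\<close>, so \<open>f I = MMD\<^sup>2\<^sub>t\<^sub>o\<^sub>t\<close>; since the
  diagonal term \<open>E k(\<xi>, \<xi>)\<close> also averages to \<open>E k(Y, Y)\<close>, the difference \<open>f I - f (I - A)\<close> is
  the claimed numerator.\<close>

lemma sum_Pow_moebius_inversion:
  fixes f :: "'a set \<Rightarrow> 'b::comm_ring_1"
  assumes "finite S"
  shows "(\<Sum>B\<in>Pow S. \<Sum>C\<in>Pow B. (-1) ^ (card B - card C) * f C) = f S"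
proof -
  have "(\<Sum>B\<in>Pow S. \<Sum>C\<in>Pow B. (-1) ^ (card B - card C) * f C)
      = (\<Sum>B\<in>Pow S. \<Sum>C | C \<in> Pow S \<and> C \<subseteq> B. (-1) ^ card B * ((-1) ^ card C * f C))"
  proof (rule sum.cong[OF refl])
    fix B assume B: "B \<in> Pow S"
    have "{C. C \<in> Pow S \<and> C \<subseteq> B} = Pow B" using B by auto
    moreover have "(-1) ^ (card B - card C) = (-1) ^ card B * ((-1) ^ card C :: 'b)"
      if "C \<in> Pow B" for C
      using that B assms card_mono[of B C] finite_subset[of B S]
      by (simp add: neg_one_power_add_eq_neg_one_power_diff[symmetric] power_add)
    ultimately show "(\<Sum>C\<in>Pow B. (-1) ^ (card B - card C) * f C) =
        (\<Sum>C | C \<in> Pow S \<and> C \<subseteq> B. (-1) ^ card B * ((-1) ^ card C * f C))"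
      by (simp add: mult.assoc)
  qed
  also have "\<dots> = (\<Sum>C\<in>Pow S. (\<Sum>B | B \<subseteq> S \<and> C \<subseteq> B. (-1) ^ card B) * ((-1) ^ card C * f C))"
    unfolding sum_distrib_left
    by (subst sum.swap_restrict; simp add: assms sum_distrib_right Pow_def)
  also have "\<dots> = (\<Sum>C\<in>Pow S. if C = S then f S else 0)"
  proof (rule sum.cong[OF refl])
    fix C assume C: "C \<in> Pow S"
    show "(\<Sum>B | B \<subseteq> S \<and> C \<subseteq> B. (-1) ^ card B) * ((-1) ^ card C * f C) = (if C = S then f S else 0)"
    proof (cases "C = S")
      case True
      have "{B. B \<subseteq> S \<and> S \<subseteq> B} = {S}" by auto
      then show ?thesis using True by (simp flip: power_add mult.assoc)
    next
      case False
      then have "C \<subset> S" using C by auto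
      then have "(\<Sum>B | B \<subseteq> S \<and> C \<subseteq> B. (-1::'b) ^ card B) = 0"
        by (intro sum_alternating_cancels) (simp_all add: assms card_subsupersets_even_odd)
      then show ?thesis using False by simp
    qed
  qed
  also have "\<dots> = f S" using assms by simp
  finally show ?thesis .
qed

lemma sum_subsets_meeting_moebius:
  fixes f :: "'a set \<Rightarrow> 'b::comm_ring_1"
  assumes "finite I"
  shows "(\<Sum>B\<in>{B. B \<subseteq> I \<and> B \<inter> A \<noteq> {}}. \<Sum>C\<in>Pow B. (-1) ^ (card B - card C) * f C)
         = f I - f (I - A)"
proof -
  have "{B. B \<subseteq> I \<and> B \<inter> A \<noteq> {}} = Pow I - Pow (I - A)" by auto
  moreover have "Pow (I - A) \<subseteq> Pow I" by auto
  ultimately show ?thesis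
    using assms by (simp add: sum_diff sum_Pow_moebius_inversion)
qed

lemma integrable_dominated:
  fixes g b :: "'a \<Rightarrow> real"
  assumes "integrable M b" "g \<in> borel_measurable M" "\<And>x. x \<in> space M \<Longrightarrow> \<bar>g x\<bar> \<le> b x"
  shows "integrable M g"
  by (rule Bochner_Integration.integrable_bound[OF assms(1,2)])
    (use assms(3) in \<open>auto intro!: AE_I2 order_trans[OF _ abs_ge_self]\<close>)

lemma abs_integral_le_integral_dominating:
  fixes g b :: "'a \<Rightarrow> real"
  assumes "integrable M b" "\<And>x. x \<in> space M \<Longrightarrow> \<bar>g x\<bar> \<le> b x"
  shows "\<bar>\<integral>x. g x \<partial>M\<bar> \<le> (\<integral>x. b x \<partial>M)"
proof -
  have "\<bar>\<integral>x. g x \<partial>M\<bar> \<le> (\<integral>x. \<bar>g x\<bar> \<partial>M)"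
    using integral_norm_bound[of M g] by simp
  also have "\<dots> \<le> (\<integral>x. b x \<partial>M)"
    using assms by (intro integral_mono') (auto intro: order_trans[OF abs_ge_zero])
  finally show ?thesis .
qed

lemma integrable_fst_pair_measure:
  fixes f :: "'a \<Rightarrow> real"
  assumes "prob_space Q" "integrable P f"
  shows "integrable (P \<Otimes>\<^sub>M Q) (\<lambda>p. f (fst p))"
proof -
  have "integrable (distr (P \<Otimes>\<^sub>M Q) P fst) f"
    using assms by (simp add: prob_space.distr_pair_fst)
  then show ?thesis
    using assms(2) by (subst (asm) integrable_distr_eq) auto
qed

lemma integrable_snd_pair_measure:
  fixes f :: "'a \<Rightarrow> real"
  assumes "prob_space P" "prob_space Q" "integrable Q f"
  shows "integrable (P \<Otimes>\<^sub>M Q) (\<lambda>p. f (snd p))"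
proof -
  interpret pair_sigma_finite Q P
    using assms by (simp add: pair_sigma_finite_def prob_space_imp_sigma_finite)
  show ?thesis
    using integrable_product_swap[OF integrable_fst_pair_measure[OF assms(1,3)]]
    by (simp add: case_prod_beta')
qed

locale measurable_pd_kernel =
  fixes K :: "'y measure" and k :: "'y \<Rightarrow> 'y \<Rightarrow> real"
  assumes pos_def: "pos_def_kernel K k"
    and measurable_kernel: "(\<lambda>(u, v). k u v) \<in> borel_measurable (K \<Otimes>\<^sub>M K)"
begin

lemma symmetric: "a \<in> space K \<Longrightarrow> b \<in> space K \<Longrightarrow> k a b = k b a"
  using pos_def unfolding pos_def_kernel_def by blast

lemma abs_le_half_diag:
  assumes "a \<in> space K" "b \<in> space K"
  shows "\<bar>k a b\<bar> \<le> (k a a + k b b) / 2"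
proof -
  define xs :: "nat \<Rightarrow> 'y" where "xs i = (if i = 0 then a else b)" for i
  have gram: "0 \<le> (\<Sum>i<2. \<Sum>j<2. c i * c j * k (xs i) (xs j))" for c :: "nat \<Rightarrow> real"
    using pos_def assms unfolding pos_def_kernel_def xs_def by simp
  have "0 \<le> k a a - 2 * k a b + k b b"
    using gram[of "\<lambda>i. if i = 0 then 1 else -1"] symmetric[OF assms]
    by (simp add: xs_def numeral_2_eq_2 lessThan_Suc)
  moreover have "0 \<le> k a a + 2 * k a b + k b b"
    using gram[of "\<lambda>_. 1"] symmetric[OF assms]
    by (simp add: xs_def numeral_2_eq_2 lessThan_Suc)
  ultimately show ?thesis by (simp add: abs_le_iff field_simps)
qed

lemma measurable_comp:
  "f \<in> measurable L K \<Longrightarrow> g \<in> measurable L K \<Longrightarrow> (\<lambda>q. k (f q) (g q)) \<in> borel_measurable L"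
  using measurable_compose[OF measurable_Pair measurable_kernel] by simp

lemma measurable_diag: "sets P = sets K \<Longrightarrow> (\<lambda>\<xi>. k \<xi> \<xi>) \<in> borel_measurable P"
  by (intro measurable_comp measurable_ident_sets)

lemma measurable_const_left: "a \<in> space K \<Longrightarrow> (\<lambda>\<zeta>. k a \<zeta>) \<in> borel_measurable K"
  by (intro measurable_comp measurable_const measurable_ident_sets refl)

lemma measurable_pair:
  assumes "sets P = sets K" "sets Q = sets K"
  shows "(\<lambda>(u, v). k u v) \<in> borel_measurable (P \<Otimes>\<^sub>M Q)"
  using measurable_comp[OF measurable_fst''[OF measurable_ident_sets[OF assms(1)]]
      measurable_snd''[OF measurable_ident_sets[OF assms(2)]]]
  by (simp add: case_prod_beta')

definition finite_kernel_moment :: "'y measure \<Rightarrow> bool" where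
  "finite_kernel_moment P \<longleftrightarrow> prob_space P \<and> sets P = sets K \<and> integrable P (\<lambda>\<xi>. k \<xi> \<xi>)"

lemma space_finite_kernel_moment: "finite_kernel_moment P \<Longrightarrow> space P = space K"
  unfolding finite_kernel_moment_def by (metis sets_eq_imp_space_eq)

definition mean_embedding :: "'y measure \<Rightarrow> 'y \<Rightarrow> real" where
  "mean_embedding P \<zeta> = (\<integral>\<xi>. k \<xi> \<zeta> \<partial>P)"

lemma integral_half_diag_plus_const:
  assumes "finite_kernel_moment P"
  shows "(\<integral>\<xi>. (k \<xi> \<xi> + c) / 2 \<partial>P) = (kdiag k P + c) / 2"
proof -
  have P: "prob_space P" "integrable P (\<lambda>\<xi>. k \<xi> \<xi>)"
    using assms unfolding finite_kernel_moment_def by auto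
  interpret prob_space P by (rule P(1))
  have "(\<integral>\<xi>. k \<xi> \<xi> + c \<partial>P) = kdiag k P + c"
    unfolding kdiag_def by (subst Bochner_Integration.integral_add) (use P(2) prob_space in auto)
  then show ?thesis by simp
qed

lemma integrable_half_diag_plus_const:
  assumes "finite_kernel_moment P"
  shows "integrable P (\<lambda>\<xi>. (k \<xi> \<xi> + c) / 2)"
proof -
  have P: "prob_space P" "integrable P (\<lambda>\<xi>. k \<xi> \<xi>)"
    using assms unfolding finite_kernel_moment_def by auto
  interpret prob_space P by (rule P(1))
  show ?thesis using P(2) by (intro integrable_divide Bochner_Integration.integrable_add integrable_const)
qed

lemma abs_mean_embedding_le:
  assumes "finite_kernel_moment P" "\<zeta> \<in> space K"
  shows "\<bar>mean_embedding P \<zeta>\<bar> \<le> (kdiag k P + k \<zeta> \<zeta>) / 2"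
proof -
  have "space P = space K"
    using assms(1) by (rule space_finite_kernel_moment)
  then have "\<bar>k \<xi> \<zeta>\<bar> \<le> (k \<xi> \<xi> + k \<zeta> \<zeta>) / 2" if "\<xi> \<in> space P" for \<xi>
    using abs_le_half_diag[OF _ assms(2)] that by simp
  then have "\<bar>mean_embedding P \<zeta>\<bar> \<le> (\<integral>\<xi>. (k \<xi> \<xi> + k \<zeta> \<zeta>) / 2 \<partial>P)"
    unfolding mean_embedding_def
    by (rule abs_integral_le_integral_dominating[OF integrable_half_diag_plus_const[OF assms(1)]])
  also have "\<dots> = (kdiag k P + k \<zeta> \<zeta>) / 2"
    by (rule integral_half_diag_plus_const[OF assms(1)])
  finally show ?thesis .
qed

lemma measurable_mean_embedding:
  assumes "finite_kernel_moment P"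
  shows "mean_embedding P \<in> borel_measurable K"
proof -
  have P: "prob_space P" "sets P = sets K" using assms unfolding finite_kernel_moment_def by auto
  interpret sigma_finite_measure P using P(1) by (rule prob_space_imp_sigma_finite)
  have "(\<lambda>q. k (snd q) (fst q)) \<in> borel_measurable (K \<Otimes>\<^sub>M P)"
    by (intro measurable_comp measurable_snd''[OF measurable_ident_sets[OF P(2)]] measurable_fst)
  then show ?thesis
    unfolding mean_embedding_def[abs_def] by (intro borel_measurable_lebesgue_integral) (simp add: split_beta')
qed

lemma integrable_mean_embedding:
  assumes "finite_kernel_moment P" "finite_kernel_moment Q"
  shows "integrable Q (mean_embedding P)"
proof (rule integrable_dominated[OF integrable_half_diag_plus_const[OF assms(2), where c = "kdiag k P"]])
  have "sets Q = sets K" using assms(2) unfolding finite_kernel_moment_def by simp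
  then show "mean_embedding P \<in> borel_measurable Q"
    using measurable_mean_embedding[OF assms(1)] measurable_cong_sets[of Q K borel borel] by simp
next
  fix \<zeta> assume "\<zeta> \<in> space Q"
  then show "\<bar>mean_embedding P \<zeta>\<bar> \<le> (k \<zeta> \<zeta> + kdiag k P) / 2"
    using abs_mean_embedding_le[OF assms(1)] space_finite_kernel_moment[OF assms(2)]
    by (simp add: add.commute)
qed

lemma kcross_eq_integral_mean_embedding:
  assumes "finite_kernel_moment P" "finite_kernel_moment Q"
  shows "kcross k P Q = (\<integral>\<zeta>. mean_embedding P \<zeta> \<partial>Q)"
proof -
  have P: "prob_space P" "sets P = sets K" "integrable P (\<lambda>\<xi>. k \<xi> \<xi>)"
    and Q: "prob_space Q" "sets Q = sets K" "integrable Q (\<lambda>\<xi>. k \<xi> \<xi>)"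
    using assms unfolding finite_kernel_moment_def by auto
  interpret pair_sigma_finite P Q
    using P(1) Q(1) by (simp add: pair_sigma_finite_def prob_space_imp_sigma_finite)
  have "integrable (P \<Otimes>\<^sub>M Q) (\<lambda>p. k (fst p) (fst p) / 2 + k (snd p) (snd p) / 2)"
    by (intro Bochner_Integration.integrable_add integrable_divide
          integrable_fst_pair_measure[OF Q(1) P(3)] integrable_snd_pair_measure[OF P(1) Q(1) Q(3)])
  moreover have "\<bar>(case p of (u, v) \<Rightarrow> k u v)\<bar> \<le> k (fst p) (fst p) / 2 + k (snd p) (snd p) / 2"
    if "p \<in> space (P \<Otimes>\<^sub>M Q)" for p
    using that abs_le_half_diag[of "fst p" "snd p"]
      space_finite_kernel_moment[OF assms(1)] space_finite_kernel_moment[OF assms(2)]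
    by (auto simp: space_pair_measure split: prod.splits)
  ultimately have "integrable (P \<Otimes>\<^sub>M Q) (\<lambda>(u, v). k u v)"
    by (rule integrable_dominated[OF _ measurable_pair[OF P(2) Q(2)]])
  then show ?thesis
    unfolding kcross_def mean_embedding_def using Fubini_integral[of k] by simp
qed

lemma abs_kcross_le:
  assumes "finite_kernel_moment P" "finite_kernel_moment Q"
  shows "\<bar>kcross k P Q\<bar> \<le> (kdiag k P + kdiag k Q) / 2"
proof -
  have "space P = space K"
    using assms(1) by (rule space_finite_kernel_moment)
  moreover have "space Q = space K"
    using assms(2) by (rule space_finite_kernel_moment)
  ultimately have "(\<integral>\<zeta>. k \<xi> \<zeta> \<partial>Q) = mean_embedding Q \<xi>" if "\<xi> \<in> space P" for \<xi>
    unfolding mean_embedding_def using that symmetric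
    by (intro Bochner_Integration.integral_cong) auto
  then have "\<bar>kcross k P Q\<bar> \<le> (\<integral>\<xi>. (k \<xi> \<xi> + kdiag k Q) / 2 \<partial>P)"
    unfolding kcross_def
    using abs_mean_embedding_le[OF assms(2)] \<open>space P = space K\<close>
    by (intro abs_integral_le_integral_dominating integrable_half_diag_plus_const[OF assms(1)])
      (auto simp: add.commute)
  also have "\<dots> = (kdiag k P + kdiag k Q) / 2"
    by (rule integral_half_diag_plus_const[OF assms(1)])
  finally show ?thesis .
qed

end

locale independent_input_model = measurable_pd_kernel K k
  for K :: "'y measure" and k :: "'y \<Rightarrow> 'y \<Rightarrow> real" +
  fixes M :: "'a measure" and N :: "nat \<Rightarrow> 'b measure" and X :: "nat \<Rightarrow> 'a \<Rightarrow> 'b"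
    and d :: nat and \<eta> :: "(nat \<Rightarrow> 'b) \<Rightarrow> 'y"
  assumes prob_space_M: "prob_space M"
    and indep: "prob_space.indep_vars M N X (idx d)"
    and measurable_eta: "\<eta> \<in> measurable (PiM (idx d) N) K"
    and integrable_condLaw_diag: "\<And>C x. C \<subseteq> idx d \<Longrightarrow> x \<in> space (PiM C N) \<Longrightarrow>
           integrable (condLaw M N X d \<eta> K C x) (\<lambda>\<xi>. k \<xi> \<xi>)"
begin

text \<open>Outside \<open>idx d\<close> the marginal is a junk Dirac mass, so that the marginals form a product
  probability space.\<close>
definition marginal :: "nat \<Rightarrow> 'b measure" where
  "marginal i = (if i \<in> idx d then distr M (N i) (X i) else return (count_space UNIV) undefined)"

abbreviation PY :: "'y measure" where
  "PY \<equiv> lawY M X d \<eta> K"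

abbreviation PYcond :: "nat set \<Rightarrow> (nat \<Rightarrow> 'b) \<Rightarrow> 'y measure" where
  "PYcond C x \<equiv> condLaw M N X d \<eta> K C x"

lemma measurable_X: "i \<in> idx d \<Longrightarrow> X i \<in> measurable M (N i)"
  using indep unfolding prob_space.indep_vars_def[OF prob_space_M] by blast

lemma prob_space_marginal: "prob_space (marginal i)"
  unfolding marginal_def using measurable_X prob_space.prob_space_distr[OF prob_space_M]
  by (auto intro: prob_space_return)

lemma product_prob_space_marginal: "product_prob_space marginal"
  by (simp add: product_prob_space_def product_prob_space_axioms_def product_sigma_finite_def
      prob_space_marginal prob_space_imp_sigma_finite)

lemma prob_space_PiM_marginal: "prob_space (PiM C marginal)"
  by (rule prob_space_PiM) (rule prob_space_marginal)

lemma PiM_distr_X_eq_PiM_marginal: "C \<subseteq> idx d \<Longrightarrow> PiM C (\<lambda>i. distr M (N i) (X i)) = PiM C marginal"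
  by (rule PiM_cong) (auto simp: marginal_def)

lemma sets_PiM_marginal: "C \<subseteq> idx d \<Longrightarrow> sets (PiM C marginal) = sets (PiM C N)"
  by (rule sets_PiM_cong) (auto simp: marginal_def)

lemma lawX_eq_PiM_marginal:
  assumes "C \<subseteq> idx d"
  shows "lawX M N X C = PiM C marginal"
proof (cases "C = {}")
  case True
  let ?u = "\<lambda>_::nat. undefined :: 'b"
  have "distr M (count_space {?u}) (\<lambda>_. ?u) = count_space {?u}"
  proof (rule measure_eqI)
    fix S assume "S \<in> sets (distr M (count_space {?u}) (\<lambda>_. ?u))"
    then have "S = {} \<or> S = {?u}" by auto
    then show "emeasure (distr M (count_space {?u}) (\<lambda>_. ?u)) S = emeasure (count_space {?u}) S"
      using prob_space.emeasure_space_1[OF prob_space_M] by (auto simp: emeasure_distr)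
  qed simp
  moreover have "(\<lambda>\<omega>. \<lambda>i\<in>{}. X i \<omega>) = (\<lambda>_. ?u)" by (auto simp: fun_eq_iff)
  ultimately show ?thesis using True by (simp add: lawX_def PiM_empty)
next
  case False
  interpret prob_space M by (rule prob_space_M)
  have "indep_vars N X C" by (rule indep_vars_subset[OF indep assms])
  then have "distr M (PiM C N) (\<lambda>x. \<lambda>i\<in>C. X i x) = PiM C (\<lambda>i. distr M (N i) (X i))"
    by (subst (asm) indep_vars_iff_distr_eq_PiM'[OF False]) (use measurable_X assms in auto)
  then show ?thesis using PiM_distr_X_eq_PiM_marginal[OF assms] by (simp add: lawX_def)
qed

lemma measurable_eta_marginal: "\<eta> \<in> measurable (PiM (idx d) marginal) K"
  using measurable_eta by (simp add: measurable_cong_sets[OF sets_PiM_marginal refl])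

lemma lawY_eq_distr_PiM: "PY = distr (PiM (idx d) marginal) K \<eta>"
proof -
  have "(\<lambda>\<omega>. \<lambda>i\<in>idx d. X i \<omega>) \<in> measurable M (PiM (idx d) N)"
    by (rule measurable_restrict) (rule measurable_X)
  then have "PY = distr (lawX M N X (idx d)) K \<eta>"
    by (simp add: lawY_def lawX_def distr_distr[OF measurable_eta] comp_def)
  then show ?thesis by (simp add: lawX_eq_PiM_marginal)
qed

lemma measurable_merge_marginal:
  "C \<subseteq> idx d \<Longrightarrow> merge C (idx d - C) \<in> measurable (PiM C marginal \<Otimes>\<^sub>M PiM (idx d - C) marginal) (PiM (idx d) marginal)"
  using measurable_merge[of C "idx d - C" marginal] by (simp add: Un_absorb1)

lemma measurable_eta_merge:
  "C \<subseteq> idx d \<Longrightarrow> x \<in> space (PiM C marginal) \<Longrightarrow>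
    (\<lambda>z. \<eta> (merge C (idx d - C) (x, z))) \<in> measurable (PiM (idx d - C) marginal) K"
  by (rule measurable_compose[OF measurable_compose[OF measurable_Pair1' measurable_merge_marginal]
        measurable_eta_marginal])

lemma condLaw_eq_distr_PiM:
  "C \<subseteq> idx d \<Longrightarrow> PYcond C x = distr (PiM (idx d - C) marginal) K (\<lambda>z. \<eta> (merge C (idx d - C) (x, z)))"
  unfolding condLaw_def by (subst PiM_distr_X_eq_PiM_marginal) auto

lemma lawY_eq_condLaw_empty: "PY = PYcond {} (\<lambda>_. undefined)"
proof -
  have "merge {} (idx d) (\<lambda>_. undefined, z) = z" if "z \<in> space (PiM (idx d) marginal)" for z
    using that by (auto simp: space_PiM PiE_def merge_def fun_eq_iff extensional_def)
  then show ?thesis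
    using condLaw_eq_distr_PiM[of "{}"] by (simp add: lawY_eq_distr_PiM cong: distr_cong)
qed

lemma finite_kernel_moment_condLaw:
  assumes "C \<subseteq> idx d" "x \<in> space (PiM C marginal)"
  shows "finite_kernel_moment (PYcond C x)"
  unfolding finite_kernel_moment_def condLaw_eq_distr_PiM[OF assms(1)]
  using assms prob_space.prob_space_distr[OF prob_space_PiM_marginal measurable_eta_merge]
    integrable_condLaw_diag[of C x] condLaw_eq_distr_PiM[OF assms(1)]
  by (simp add: sets_eq_imp_space_eq[OF sets_PiM_marginal])

lemma finite_kernel_moment_lawY: "finite_kernel_moment PY"
  unfolding lawY_eq_condLaw_empty by (rule finite_kernel_moment_condLaw) auto

lemma integral_condLaw:
  fixes g :: "'y \<Rightarrow> real"
  assumes "C \<subseteq> idx d" "x \<in> space (PiM C marginal)" "g \<in> borel_measurable K"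
  shows "(\<integral>\<xi>. g \<xi> \<partial>PYcond C x) = (\<integral>z. g (\<eta> (merge C (idx d - C) (x, z))) \<partial>PiM (idx d - C) marginal)"
  unfolding condLaw_eq_distr_PiM[OF assms(1)]
  by (rule integral_distr[OF measurable_eta_merge[OF assms(1,2)] assms(3)])

text \<open>Fubini on \<open>PiM C \<times> PiM (idx d - C)\<close>, transported to \<open>PiM (idx d)\<close> along \<open>merge\<close>.\<close>
lemma integral_merge_marginal:
  fixes g :: "(nat \<Rightarrow> 'b) \<Rightarrow> real"
  assumes C: "C \<subseteq> idx d" and g: "integrable (PiM (idx d) marginal) g"
  shows "integrable (PiM C marginal) (\<lambda>x. \<integral>z. g (merge C (idx d - C) (x, z)) \<partial>PiM (idx d - C) marginal)"
    and "(\<integral>x. (\<integral>z. g (merge C (idx d - C) (x, z)) \<partial>PiM (idx d - C) marginal) \<partial>PiM C marginal)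
           = (\<integral>w. g w \<partial>PiM (idx d) marginal)"
proof -
  interpret product_sigma_finite marginal
    using product_prob_space_marginal by (simp add: product_prob_space_def)
  interpret pair_sigma_finite "PiM C marginal" "PiM (idx d - C) marginal"
    by (simp add: pair_sigma_finite_def prob_space_imp_sigma_finite prob_space_PiM_marginal)
  have "distr (PiM C marginal \<Otimes>\<^sub>M PiM (idx d - C) marginal) (PiM (idx d) marginal) (merge C (idx d - C))
      = PiM (idx d) marginal"
    using distr_merge[of C "idx d - C"] C finite_subset[OF C] by (simp add: Un_absorb1)
  moreover have "g \<in> borel_measurable (PiM (idx d) marginal)" using g by auto
  ultimately have int: "integrable (PiM C marginal \<Otimes>\<^sub>M PiM (idx d - C) marginal) (\<lambda>p. g (merge C (idx d - C) p))"
    and eq: "(\<integral>w. g w \<partial>PiM (idx d) marginal)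
               = (\<integral>p. g (merge C (idx d - C) p) \<partial>(PiM C marginal \<Otimes>\<^sub>M PiM (idx d - C) marginal))"
    using g integrable_distr_eq[OF measurable_merge_marginal[OF C]]
      integral_distr[OF measurable_merge_marginal[OF C]] by metis+
  show "integrable (PiM C marginal) (\<lambda>x. \<integral>z. g (merge C (idx d - C) (x, z)) \<partial>PiM (idx d - C) marginal)"
    using integrable_fst'[OF int] by simp
  show "(\<integral>x. (\<integral>z. g (merge C (idx d - C) (x, z)) \<partial>PiM (idx d - C) marginal) \<partial>PiM C marginal)
           = (\<integral>w. g w \<partial>PiM (idx d) marginal)"
    using integral_fst'[OF int] eq by simp
qed

lemma condLaw_tower:
  fixes g :: "'y \<Rightarrow> real"
  assumes C: "C \<subseteq> idx d" and g: "integrable PY g"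
  shows "integrable (PiM C marginal) (\<lambda>x. \<integral>\<xi>. g \<xi> \<partial>PYcond C x)"
    and "(\<integral>x. (\<integral>\<xi>. g \<xi> \<partial>PYcond C x) \<partial>PiM C marginal) = (\<integral>\<xi>. g \<xi> \<partial>PY)"
proof -
  have gK: "g \<in> borel_measurable K"
    using g by (simp add: lawY_eq_distr_PiM)
  have integrable_g_eta: "integrable (PiM (idx d) marginal) (\<lambda>w. g (\<eta> w))"
    using g by (simp add: lawY_eq_distr_PiM integrable_distr_eq[OF measurable_eta_marginal gK])
  have cond: "(\<integral>\<xi>. g \<xi> \<partial>PYcond C x) = (\<integral>z. g (\<eta> (merge C (idx d - C) (x, z))) \<partial>PiM (idx d - C) marginal)"
    if "x \<in> space (PiM C marginal)" for x
    by (rule integral_condLaw[OF C that gK])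
  show "integrable (PiM C marginal) (\<lambda>x. \<integral>\<xi>. g \<xi> \<partial>PYcond C x)"
    using integral_merge_marginal(1)[OF C integrable_g_eta]
    by (simp add: Bochner_Integration.integrable_cong[OF refl cond])
  have "(\<integral>\<xi>. g \<xi> \<partial>PY) = (\<integral>w. g (\<eta> w) \<partial>PiM (idx d) marginal)"
    unfolding lawY_eq_distr_PiM by (rule integral_distr[OF measurable_eta_marginal gK])
  then show "(\<integral>x. (\<integral>\<xi>. g \<xi> \<partial>PYcond C x) \<partial>PiM C marginal) = (\<integral>\<xi>. g \<xi> \<partial>PY)"
    using integral_merge_marginal(2)[OF C integrable_g_eta]
    by (simp add: Bochner_Integration.integral_cong[OF refl cond])
qed

lemma integrable_kdiag_condLaw:
  "C \<subseteq> idx d \<Longrightarrow> integrable (PiM C marginal) (\<lambda>x. kdiag k (PYcond C x))"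
  using condLaw_tower(1) finite_kernel_moment_lawY
  unfolding finite_kernel_moment_def kdiag_def by blast

lemma integral_kdiag_condLaw:
  "C \<subseteq> idx d \<Longrightarrow> (\<integral>x. kdiag k (PYcond C x) \<partial>PiM C marginal) = kdiag k PY"
  using condLaw_tower(2) finite_kernel_moment_lawY
  unfolding finite_kernel_moment_def kdiag_def by blast

lemma kcross_condLaw:
  assumes C: "C \<subseteq> idx d" and x: "x \<in> space (PiM C marginal)"
  shows "kcross k (PYcond C x) (PYcond C x) =
    (\<integral>z. (\<integral>z'. k (\<eta> (merge C (idx d - C) (x, z))) (\<eta> (merge C (idx d - C) (x, z')))
        \<partial>PiM (idx d - C) marginal) \<partial>PiM (idx d - C) marginal)"
proof -
  let ?h = "\<lambda>z. \<eta> (merge C (idx d - C) (x, z))"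
  have Q: "prob_space (PYcond C x)" "sets (PYcond C x) = sets K"
    using finite_kernel_moment_condLaw[OF C x] unfolding finite_kernel_moment_def by auto
  interpret sigma_finite_measure "PYcond C x" using Q(1) by (rule prob_space_imp_sigma_finite)
  have "(\<lambda>\<xi>. \<integral>\<zeta>. k \<xi> \<zeta> \<partial>PYcond C x) \<in> borel_measurable K"
    using measurable_pair[OF refl Q(2)] by (intro borel_measurable_lebesgue_integral) simp
  then have "kcross k (PYcond C x) (PYcond C x)
      = (\<integral>z. (\<integral>\<zeta>. k (?h z) \<zeta> \<partial>PYcond C x) \<partial>PiM (idx d - C) marginal)"
    unfolding kcross_def by (rule integral_condLaw[OF C x])
  also have "\<dots> = (\<integral>z. (\<integral>z'. k (?h z) (?h z') \<partial>PiM (idx d - C) marginal) \<partial>PiM (idx d - C) marginal)"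
    using measurable_space[OF measurable_eta_merge[OF C x]]
    by (intro Bochner_Integration.integral_cong refl integral_condLaw[OF C x] measurable_const_left)
  finally show ?thesis .
qed

lemma integrable_kcross_condLaw:
  assumes C: "C \<subseteq> idx d"
  shows "integrable (PiM C marginal) (\<lambda>x. kcross k (PYcond C x) (PYcond C x))"
proof -
  interpret sigma_finite_measure "PiM (idx d - C) marginal"
    by (rule prob_space_imp_sigma_finite[OF prob_space_PiM_marginal])
  let ?L = "(PiM C marginal \<Otimes>\<^sub>M PiM (idx d - C) marginal) \<Otimes>\<^sub>M PiM (idx d - C) marginal"
  note [measurable] = measurable_merge_marginal[OF C] measurable_eta_marginal
  have "(\<lambda>q. \<eta> (merge C (idx d - C) (fst q))) \<in> measurable ?L K"
    and "(\<lambda>q. \<eta> (merge C (idx d - C) (fst (fst q), snd q))) \<in> measurable ?L K"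
    by measurable
  from measurable_comp[OF this]
  have "(\<lambda>(p, z'). k (\<eta> (merge C (idx d - C) p)) (\<eta> (merge C (idx d - C) (fst p, z'))))
      \<in> borel_measurable ?L"
    by (simp add: split_beta')
  then have "(\<lambda>p. \<integral>z'. k (\<eta> (merge C (idx d - C) p)) (\<eta> (merge C (idx d - C) (fst p, z')))
      \<partial>PiM (idx d - C) marginal) \<in> borel_measurable (PiM C marginal \<Otimes>\<^sub>M PiM (idx d - C) marginal)"
    by (rule borel_measurable_lebesgue_integral)
  then have "(\<lambda>x. \<integral>z. (\<integral>z'. k (\<eta> (merge C (idx d - C) (x, z))) (\<eta> (merge C (idx d - C) (x, z')))
      \<partial>PiM (idx d - C) marginal) \<partial>PiM (idx d - C) marginal) \<in> borel_measurable (PiM C marginal)"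
    by (intro borel_measurable_lebesgue_integral) (simp add: split_beta')
  then have "(\<lambda>x. kcross k (PYcond C x) (PYcond C x)) \<in> borel_measurable (PiM C marginal)"
    by (simp add: kcross_condLaw[OF C] cong: measurable_cong)
  moreover have "\<bar>kcross k (PYcond C x) (PYcond C x)\<bar> \<le> kdiag k (PYcond C x)"
    if "x \<in> space (PiM C marginal)" for x
    using abs_kcross_le[OF finite_kernel_moment_condLaw[OF C that] finite_kernel_moment_condLaw[OF C that]]
    by simp
  ultimately show ?thesis
    by (rule integrable_dominated[OF integrable_kdiag_condLaw[OF C]])
qed

lemma integral_kcross_lawY_condLaw:
  assumes C: "C \<subseteq> idx d"
  shows "integrable (PiM C marginal) (\<lambda>x. kcross k PY (PYcond C x))"
    and "(\<integral>x. kcross k PY (PYcond C x) \<partial>PiM C marginal) = kcross k PY PY"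
proof -
  note tower = condLaw_tower[OF C integrable_mean_embedding[OF finite_kernel_moment_lawY finite_kernel_moment_lawY]]
  have eq: "kcross k PY (PYcond C x) = (\<integral>\<zeta>. mean_embedding PY \<zeta> \<partial>PYcond C x)"
    if "x \<in> space (PiM C marginal)" for x
    by (rule kcross_eq_integral_mean_embedding[OF finite_kernel_moment_lawY finite_kernel_moment_condLaw[OF C that]])
  show "integrable (PiM C marginal) (\<lambda>x. kcross k PY (PYcond C x))"
    using tower(1) by (simp add: Bochner_Integration.integrable_cong[OF refl eq])
  show "(\<integral>x. kcross k PY (PYcond C x) \<partial>PiM C marginal) = kcross k PY PY"
    using tower(2) kcross_eq_integral_mean_embedding[OF finite_kernel_moment_lawY finite_kernel_moment_lawY]
    by (simp add: Bochner_Integration.integral_cong[OF refl eq])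
qed

lemma integral_mmd2_condLaw:
  assumes C: "C \<subseteq> idx d"
  shows "(\<integral>x. mmd2 k PY (PYcond C x) \<partial>lawX M N X C)
           = (\<integral>x. kcross k (PYcond C x) (PYcond C x) \<partial>PiM C marginal) - kcross k PY PY"
proof -
  interpret prob_space "PiM C marginal" by (rule prob_space_PiM_marginal)
  show ?thesis
    unfolding lawX_eq_PiM_marginal[OF C] mmd2_def
    using integral_kcross_lawY_condLaw[OF C] integrable_kcross_condLaw[OF C]
    by (simp add: Bochner_Integration.integral_add Bochner_Integration.integral_diff prob_space)
qed

text \<open>Given all inputs, the conditional law is a Dirac mass, so its cross term is its diagonal term.\<close>
lemma integral_kcross_condLaw_all:
  "(\<integral>x. kcross k (PYcond (idx d) x) (PYcond (idx d) x) \<partial>PiM (idx d) marginal) = kdiag k PY"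
proof -
  have "kcross k (PYcond (idx d) x) (PYcond (idx d) x) = kdiag k (PYcond (idx d) x)"
    if "x \<in> space (PiM (idx d) marginal)" for x
    using kcross_condLaw[OF order_refl that]
      integral_condLaw[OF order_refl that measurable_diag[OF refl]]
    by (simp add: kdiag_def PiM_empty lebesgue_integral_count_space_finite)
  then show ?thesis
    using integral_kdiag_condLaw[OF order_refl] by (simp cong: Bochner_Integration.integral_cong)
qed

end

theorem mainTheorem4:
  fixes M :: "'a measure" and N :: "nat \<Rightarrow> 'b measure" and X :: "nat \<Rightarrow> 'a \<Rightarrow> 'b"
    and d :: nat and \<eta> :: "(nat \<Rightarrow> 'b) \<Rightarrow> 'y" and K :: "'y measure"
    and k :: "'y \<Rightarrow> 'y \<Rightarrow> real" and A :: "nat set"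
  assumes "prob_space M"
    and "prob_space.indep_vars M N X (idx d)"
    and "\<eta> \<in> measurable (PiM (idx d) N) K"
    and "pos_def_kernel K k"
    and "(\<lambda>(u, v). k u v) \<in> borel_measurable (K \<Otimes>\<^sub>M K)"
    and "\<And>C x. C \<subseteq> idx d \<Longrightarrow> x \<in> space (PiM C N) \<Longrightarrow>
           integrable (condLaw M N X d \<eta> K C x) (\<lambda>\<xi>. k \<xi> \<xi>)"
    and "MMD2_tot M X d \<eta> K k > 0"
    and "A \<subseteq> idx d"
  shows "total_MMD_index M N X d \<eta> K k A =
     (\<integral>x. kdiag k (condLaw M N X d \<eta> K (idx d - A) x)
           - kcross k (condLaw M N X d \<eta> K (idx d - A) x) (condLaw M N X d \<eta> K (idx d - A) x)
        \<partial>(lawX M N X (idx d - A))) / MMD2_tot M X d \<eta> K k"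
proof -
  interpret independent_input_model K k M N X d \<eta>
    by (rule independent_input_model.intro[OF measurable_pd_kernel.intro
          independent_input_model_axioms.intro]) (fact assms)+
  \<comment> \<open>The identity holds between the numerators for every \<open>A\<close>.\<close>
  define E where "E C = (\<integral>x. mmd2 k PY (PYcond C x) \<partial>lawX M N X C)" for C
  let ?Q = "PYcond (idx d - A)"
  have A': "idx d - A \<subseteq> idx d" by auto
  have "(\<Sum>B\<in>{B. B \<subseteq> idx d \<and> B \<inter> A \<noteq> {}}. MMD2_B M N X d \<eta> K k B) = E (idx d) - E (idx d - A)"
    unfolding MMD2_B_def E_def by (rule sum_subsets_meeting_moebius) simp
  also have "\<dots> = kdiag k PY - (\<integral>x. kcross k (?Q x) (?Q x) \<partial>PiM (idx d - A) marginal)"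
    unfolding E_def integral_mmd2_condLaw[OF order_refl] integral_mmd2_condLaw[OF A']
      integral_kcross_condLaw_all by simp
  also have "\<dots> = (\<integral>x. kdiag k (?Q x) - kcross k (?Q x) (?Q x) \<partial>lawX M N X (idx d - A))"
    unfolding lawX_eq_PiM_marginal[OF A']
    using integrable_kdiag_condLaw[OF A'] integrable_kcross_condLaw[OF A'] integral_kdiag_condLaw[OF A']
    by (simp add: Bochner_Integration.integral_diff)
  finally show ?thesis
    unfolding total_MMD_index_def MMD2_tot_def by simp
qed

end
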